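(* Assume (A9) of the context with constants $C_{\max}$ and $0<c<1$. Then for every $0<\epsilon<1-c$, with probability at least $1-\exp\big(-\frac{2n_q\epsilon^2}{C_{\max}^2}\big)$ over the sample $x_q^{(1)},\dots,x_q^{(n_q)}$, $$\sup_{x}\ \sup_{\delta\in\mathbb{R}^D:\|\delta\|\le\|\theta^*\|}\hat r(x;\theta^*+\delta)\le C'_{\mathrm{ratio}}:=\frac{C_{\max}}{1-c-\epsilon}<\infty.$$
   Context: $Q$ is a distribution on $\mathbb{R}^m$ with density $q$; $x_q^{(1)},\dots,x_q^{(n_q)}$ are i.i.d. from $Q$. $f:\mathbb{R}^m\to\mathbb{R}^D$ is a feature map; $r(x;\theta)=\exp(\theta^\top f(x))/N(\theta)$ with $N(\theta)=\mathbb{E}_{x\sim Q}[\exp(\theta^\top f(x))]$; $\hat N(\theta)=\frac1{n_q}\sum_i\exp(\theta^\top f(x_q^{(i)}))$; $\hat r(x;\theta)=\exp(\theta^\top f(x))/\hat N(\theta)$. $\theta^*\in\mathbb{R}^D$ is fixed; $\|\cdot\|$ is the Euclidean norm. (A9) For all $\delta$ with $\|\delta\|\le\|\theta^*\|$ and all $x$: $0<r(x;\theta^*+\delta)\le C_{\max}$; and $\mathbb{E}_{x\sim Q}\big[\inf_{\delta:\|\delta\|\le\|\theta^*\|}r(x;\theta^*+\delta)\big]\ge1-c$ for a constant $0<c<1$. *)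

theory Defs
  imports "HOL-Probability.Probability"
begin

definition Nnorm :: "'a measure \<Rightarrow> ('a \<Rightarrow> 'd::real_inner) \<Rightarrow> 'd \<Rightarrow> real" where
  "Nnorm Q f \<theta> = (\<integral>x. exp (\<theta> \<bullet> f x) \<partial>Q)"

definition ratio :: "'a measure \<Rightarrow> ('a \<Rightarrow> 'd::real_inner) \<Rightarrow> 'd \<Rightarrow> 'a \<Rightarrow> real" where
  "ratio Q f \<theta> x = exp (\<theta> \<bullet> f x) / Nnorm Q f \<theta>"

definition Nhat :: "('a \<Rightarrow> 'd::real_inner) \<Rightarrow> nat \<Rightarrow> (nat \<Rightarrow> 'a) \<Rightarrow> 'd \<Rightarrow> real" where
  "Nhat f n xs \<theta> = (\<Sum>i<n. exp (\<theta> \<bullet> f (xs i))) / real n"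

definition rhat :: "('a \<Rightarrow> 'd::real_inner) \<Rightarrow> nat \<Rightarrow> (nat \<Rightarrow> 'a) \<Rightarrow> 'd \<Rightarrow> 'a \<Rightarrow> real" where
  "rhat f n xs \<theta> x = exp (\<theta> \<bullet> f x) / Nhat f n xs \<theta>"

end

theory Submission
  imports Defs
begin

text \<open>
  Under (A9) every ratio r(x; \<theta>* + \<delta>) dominates the lower envelope
  g(x) = inf_\<delta> r(x; \<theta>* + \<delta>), which takes values in [0, Cmax] and has mean at least 1 - c.
  The normaliser cancels in the empirical ratio, rhat(x; \<theta>) = r(x; \<theta>) / (1/n \<Sum>_i r(x_i; \<theta>)),
  and the sample mean in the denominator is at least the sample mean of g, uniformly in \<delta>.
  By Hoeffding's inequality the latter exceeds 1 - c - \<epsilon> except with probability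
  exp(-2 n \<epsilon>^2 / Cmax^2).
\<close>

lemma (in product_prob_space) indep_vars_PiM_components:
  assumes "finite I" "I \<noteq> {}"
  shows "prob_space.indep_vars (PiM I M) M (\<lambda>i x. x i) I"
proof -
  interpret P: prob_space "PiM I M"
    by (rule prob_space_PiM) (simp add: M.prob_space_axioms)
  show ?thesis
  proof (subst P.indep_vars_iff_distr_eq_PiM')
    show "(\<lambda>x. x i) \<in> measurable (PiM I M) (M i)" if "i \<in> I" for i
      using that by (rule measurable_component_singleton)
    have "distr (PiM I M) (PiM I M) (\<lambda>x. restrict x I) = PiM I M"
      using assms by (intro distr_PiM_restrict_finite) auto
    also have "\<dots> = PiM I (\<lambda>i. distr (PiM I M) (M i) (\<lambda>x. x i))"
      by (intro PiM_cong) (auto simp: PiM_component)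
    finally show "distr (PiM I M) (PiM I M) (\<lambda>x. restrict x I) =
        PiM I (\<lambda>i. distr (PiM I M) (M i) (\<lambda>x. x i))" .
  qed (use assms in auto)
qed

lemma sample_mean_Hoeffding_le:
  fixes g :: "'a \<Rightarrow> real"
  assumes Q: "prob_space Q"
    and g_meas: "g \<in> borel_measurable Q"
    and g_range: "\<And>x. x \<in> space Q \<Longrightarrow> g x \<in> {a..b}"
    and "a < b" "0 < n" "0 \<le> \<epsilon>"
  shows "measure (PiM {..<n} (\<lambda>_. Q))
           {xs \<in> space (PiM {..<n} (\<lambda>_. Q)). (\<Sum>i<n. g (xs i)) / real n \<le> (\<integral>x. g x \<partial>Q) - \<epsilon>}
         \<le> exp (- 2 * real n * \<epsilon>\<^sup>2 / (b - a)\<^sup>2)"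
proof -
  define M where "M = PiM {..<n} (\<lambda>_. Q)"
  interpret Q: prob_space Q by (fact Q)
  interpret P: product_prob_space "\<lambda>_. Q" "{..<n}" by unfold_locales
  interpret M: prob_space M
    unfolding M_def by (rule prob_space_PiM) (simp add: Q)
  have component: "distr M Q (\<lambda>xs. xs i) = Q" if "i < n" for i
    unfolding M_def by (rule P.PiM_component) (use that in auto)
  have component_meas [measurable]: "(\<lambda>xs. xs i) \<in> measurable M Q" if "i < n" for i
    unfolding M_def using that by (intro measurable_component_singleton) auto
  have distr_g: "distr M borel (\<lambda>xs. g (xs i)) = distr Q borel g" if "i < n" for i
  proof -
    have "distr M borel (\<lambda>xs. g (xs i)) = distr (distr M Q (\<lambda>xs. xs i)) borel g"
      using that g_meas by (subst distr_distr) (auto simp: comp_def)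
    then show ?thesis
      using component[OF that] by simp
  qed
  have "M.indep_vars (\<lambda>_. Q) (\<lambda>i xs. xs i) {..<n}"
    unfolding M_def using \<open>0 < n\<close> by (intro P.indep_vars_PiM_components) auto
  then have indep: "M.indep_vars (\<lambda>_. borel) (\<lambda>i xs. g (xs i)) {..<n}"
    by (rule M.indep_vars_compose2) (use g_meas in simp)
  interpret H: Hoeffding_ineq_iid M "{..<n}" "\<lambda>i xs. g (xs i)" "\<lambda>xs. g (xs 0)" a b
    "M.expectation (\<lambda>xs. g (xs 0))"
  proof unfold_locales
    show "distr M borel (\<lambda>xs. g (xs i)) = distr M borel (\<lambda>xs. g (xs 0))" if "i \<in> {..<n}" for i
      using distr_g[of i] distr_g[of 0] that \<open>0 < n\<close> by simp
    show "AE xs in M. g (xs 0) \<in> {a..b}"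
      using g_range measurable_space[OF component_meas[OF \<open>0 < n\<close>]] by (intro AE_I2) blast
    show "(\<lambda>xs. g (xs 0)) \<in> borel_measurable M"
      using g_meas component_meas[OF \<open>0 < n\<close>] by (rule measurable_compose[rotated])
  qed (use indep in simp_all)
  have "M.expectation (\<lambda>xs. g (xs 0)) = integral\<^sup>L (distr M Q (\<lambda>xs. xs 0)) g"
    using component_meas[OF \<open>0 < n\<close>] g_meas by (rule integral_distr[symmetric])
  also have "\<dots> = (\<integral>x. g x \<partial>Q)"
    by (subst component[OF \<open>0 < n\<close>]) (rule refl)
  finally have "M.expectation (\<lambda>xs. g (xs 0)) = (\<integral>x. g x \<partial>Q)" .
  then show ?thesis
    using H.Hoeffding_ineq_le'[of \<epsilon>] \<open>a < b\<close> \<open>0 < n\<close> \<open>0 \<le> \<epsilon>\<close> unfolding M_def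
    by (simp add: lessThan_empty_iff)
qed

lemma rhat_eq_ratio_div_sample_mean:
  assumes "Nnorm Q f \<theta> \<noteq> 0"
  shows "rhat f n xs \<theta> x = ratio Q f \<theta> x / ((\<Sum>i<n. ratio Q f \<theta> (xs i)) / real n)"
  using assms by (simp add: rhat_def Nhat_def ratio_def sum_divide_distrib[symmetric])

definition ratio_envelope :: "'a measure \<Rightarrow> ('a \<Rightarrow> 'd::real_inner) \<Rightarrow> 'd \<Rightarrow> 'a \<Rightarrow> real" where
  "ratio_envelope Q f \<theta>s x = (INF \<delta>\<in>{\<delta>. norm \<delta> \<le> norm \<theta>s}. ratio Q f (\<theta>s + \<delta>) x)"

context
  fixes Q :: "'a measure" and f :: "'a \<Rightarrow> 'd::real_inner" and \<theta>s :: 'd and Cmax :: real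
  assumes ratio_bounds: "\<And>\<delta> x. norm \<delta> \<le> norm \<theta>s \<Longrightarrow>
             0 < ratio Q f (\<theta>s + \<delta>) x \<and> ratio Q f (\<theta>s + \<delta>) x \<le> Cmax"
begin

lemma ratio_envelope_le_ratio:
  assumes "norm \<delta> \<le> norm \<theta>s"
  shows "ratio_envelope Q f \<theta>s x \<le> ratio Q f (\<theta>s + \<delta>) x"
  unfolding ratio_envelope_def using assms ratio_bounds
  by (intro cINF_lower bdd_belowI[of _ 0]) (auto intro: less_imp_le)

lemma ratio_envelope_nonneg: "0 \<le> ratio_envelope Q f \<theta>s x"
  unfolding ratio_envelope_def using ratio_bounds
  by (intro cINF_greatest) (auto intro: less_imp_le exI[of _ 0])

lemma ratio_envelope_le_bound: "ratio_envelope Q f \<theta>s x \<le> Cmax"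
proof -
  have "ratio_envelope Q f \<theta>s x \<le> ratio Q f \<theta>s x"
    using ratio_envelope_le_ratio[of 0 x] by simp
  also have "\<dots> \<le> Cmax"
    using ratio_bounds[of 0 x] by simp
  finally show ?thesis .
qed

lemma rhat_le_of_envelope_sample_mean:
  assumes "norm \<delta> \<le> norm \<theta>s" "0 < t"
    and t_le: "t \<le> (\<Sum>i<n. ratio_envelope Q f \<theta>s (xs i)) / real n"
  shows "rhat f n xs (\<theta>s + \<delta>) x \<le> Cmax / t"
proof -
  let ?r = "ratio Q f (\<theta>s + \<delta>)"
  have "Nnorm Q f (\<theta>s + \<delta>) \<noteq> 0"
    using ratio_bounds[OF \<open>norm \<delta> \<le> norm \<theta>s\<close>, of x] by (auto simp: ratio_def)
  then have "rhat f n xs (\<theta>s + \<delta>) x = ?r x / ((\<Sum>i<n. ?r (xs i)) / real n)"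
    by (rule rhat_eq_ratio_div_sample_mean)
  also have "\<dots> \<le> ?r x / t"
  proof -
    have "(\<Sum>i<n. ratio_envelope Q f \<theta>s (xs i)) \<le> (\<Sum>i<n. ?r (xs i))"
      using assms(1) by (intro sum_mono ratio_envelope_le_ratio)
    then have "t \<le> (\<Sum>i<n. ?r (xs i)) / real n"
      using t_le by (meson divide_right_mono of_nat_0_le_iff order_trans)
    then show ?thesis
      using ratio_bounds[OF assms(1), of x] \<open>0 < t\<close> by (intro divide_left_mono mult_pos_pos) auto
  qed
  also have "\<dots> \<le> Cmax / t"
    using ratio_bounds[OF assms(1), of x] \<open>0 < t\<close> by (intro divide_right_mono) auto
  finally show ?thesis .
qed

end

theorem proposition9:
  fixes Q :: "'a::euclidean_space measure"
    and q :: "'a \<Rightarrow> real"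
    and f :: "'a \<Rightarrow> 'd::euclidean_space"
    and \<theta>s :: 'd
    and n :: nat
    and Cmax c \<epsilon> :: real
  assumes Q_density: "Q = density lborel (\<lambda>x. ennreal (q x))"
    and q_meas: "q \<in> borel_measurable lborel"
    and q_nonneg: "\<And>x. 0 \<le> q x"
    and Q_prob: "prob_space Q"
    and c_pos: "0 < c" and c_lt1: "c < 1"
    and A9_bound: "\<And>\<delta> x. norm \<delta> \<le> norm \<theta>s \<Longrightarrow>
                     0 < ratio Q f (\<theta>s + \<delta>) x \<and> ratio Q f (\<theta>s + \<delta>) x \<le> Cmax"
    and A9_mean: "(\<integral>x. (INF \<delta>\<in>{\<delta>. norm \<delta> \<le> norm \<theta>s}. ratio Q f (\<theta>s + \<delta>) x) \<partial>Q) \<ge> 1 - c"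
    and eps_pos: "0 < \<epsilon>" and eps_lt: "\<epsilon> < 1 - c"
  shows "\<exists>A \<in> sets (PiM {..<n} (\<lambda>_. Q)).
           A \<subseteq> {xs \<in> space (PiM {..<n} (\<lambda>_. Q)).
                   \<forall>x \<delta>. norm \<delta> \<le> norm \<theta>s \<longrightarrow>
                     rhat f n xs (\<theta>s + \<delta>) x \<le> Cmax / (1 - c - \<epsilon>)}
         \<and> measure (PiM {..<n} (\<lambda>_. Q)) A \<ge> 1 - exp (- 2 * real n * \<epsilon>\<^sup>2 / Cmax\<^sup>2)"
proof -
  let ?P = "PiM {..<n} (\<lambda>_. Q)"
  let ?g = "ratio_envelope Q f \<theta>s"
  have mean_g: "1 - c \<le> (\<integral>x. ?g x \<partial>Q)"
    using A9_mean unfolding ratio_envelope_def .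
  \<comment> \<open>A non-integrable envelope would have integral 0, contradicting A9_mean.\<close>
  have "integrable Q ?g"
    using mean_g c_lt1 not_integrable_integral_eq by force
  then have g_meas [measurable]: "?g \<in> borel_measurable Q"
    by blast
  have "0 < Cmax"
    using A9_bound[of 0] by force
  show ?thesis
  proof (cases "n = 0")
    case False
    interpret P: prob_space ?P
      using Q_prob by (intro prob_space_PiM)
    define B where "B = {xs \<in> space ?P. (\<Sum>i<n. ?g (xs i)) / real n \<le> (\<integral>x. ?g x \<partial>Q) - \<epsilon>}"
    have "B \<in> P.events"
      unfolding B_def using False by measurable
    moreover have "P.prob B \<le> exp (- 2 * real n * \<epsilon>\<^sup>2 / Cmax\<^sup>2)"
      using sample_mean_Hoeffding_le[OF Q_prob g_meas, of 0 Cmax n \<epsilon>] \<open>0 < Cmax\<close> False eps_pos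
        ratio_envelope_nonneg[OF A9_bound] ratio_envelope_le_bound[OF A9_bound]
      unfolding B_def by simp
    moreover have "space ?P - B \<subseteq> {xs \<in> space ?P. \<forall>x \<delta>. norm \<delta> \<le> norm \<theta>s \<longrightarrow>
                     rhat f n xs (\<theta>s + \<delta>) x \<le> Cmax / (1 - c - \<epsilon>)}"
      using rhat_le_of_envelope_sample_mean[OF A9_bound, of _ "1 - c - \<epsilon>"] mean_g eps_lt
      unfolding B_def by force
    ultimately show ?thesis
      using P.prob_compl by (intro bexI[of _ "space ?P - B"]) auto
  qed (intro bexI[of _ "{}"], auto) \<comment> \<open>for n = 0 the required probability is 1 - exp 0 = 0\<close>
qed

end
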